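(* Let $\varepsilon>0$ be a constant, $m=m(n)=n^{1+\varepsilon}$ and $\mu=\mu(n)=n^{-\varepsilon}$. Suppose that for every $n$ there is a matrix $A_n\in\mathbb{F}_2^{m\times n}$ such that there is no family of polynomial-size non-uniform nondeterministic circuits $C:\{0,1\}^m\to\{0,1\}$ that accepts a constant fraction of uniformly random strings in $\{0,1\}^m$ but rejects every string of the form $A_n\vec{s}+\vec{e}$ with $\vec{s}\in\mathbb{F}_2^n$ and $\vec{e}\in\mathbb{F}_2^m$ of Hamming weight at most $\mu m$. Then there exist constants $\varepsilon'>0$, $d\ge2$ and a (non-uniformly computable) family of demi-bits generators $\{g_n:\{0,1\}^n\to\{0,1\}^{n^{1+\varepsilon'}}\}$ secure against $\mathbf{NP}/\mathrm{poly}$ such that each output bit of $g_n$ is computable by a polynomial of degree $d$ over $\mathbb{F}_2$.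
   Context: A family $\{g_n:\{0,1\}^n\to\{0,1\}^{N(n)}\}$ with $N(n)>n$, computable by polynomial-size circuits, is a demi-bits generator secure against $\mathbf{NP}/\mathrm{poly}$ if there is no family of polynomial-size nondeterministic circuits $D$ that accepts a constant fraction of $y\in\{0,1\}^{N}$ while rejecting every $y\in\mathrm{Range}(g_n)$ (for all sufficiently large $n$). *)

theory Defs
  imports Complex_Main
begin

text \<open>Boolean circuits as straight-line programs over the basis AND/OR/NOT.
  Strings in {0,1}^k are bool lists of length k (True = 1).\<close>

datatype gate = Input nat | Const bool | Neg nat | And nat nat | Or nat nat

definition wire :: "bool list \<Rightarrow> nat \<Rightarrow> bool" where
  "wire vs j = (if j < length vs then vs ! j else False)"

fun gate_val :: "bool list \<Rightarrow> bool list \<Rightarrow> gate \<Rightarrow> bool" where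
  "gate_val x vs (Input i) = wire x i"
| "gate_val x vs (Const b) = b"
| "gate_val x vs (Neg j) = (\<not> wire vs j)"
| "gate_val x vs (And j k) = (wire vs j \<and> wire vs k)"
| "gate_val x vs (Or j k) = (wire vs j \<or> wire vs k)"

text \<open>Values of all wires (gate i may only read wires j < i).\<close>
definition wire_vals :: "gate list \<Rightarrow> bool list \<Rightarrow> bool list" where
  "wire_vals gs x = foldl (\<lambda>vs g. vs @ [gate_val x vs g]) [] gs"

definition circ_eval :: "gate list \<Rightarrow> bool list \<Rightarrow> bool" where
  "circ_eval gs x = (gs \<noteq> [] \<and> last (wire_vals gs x))"

text \<open>Multi-output circuit: gates plus a list of output wires; size = number of gates.\<close>
definition mcirc_eval :: "gate list \<times> nat list \<Rightarrow> bool list \<Rightarrow> bool list" where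
  "mcirc_eval C x = map (wire (wire_vals (fst C) x)) (snd C)"

definition nd_accepts :: "gate list \<times> nat \<Rightarrow> bool list \<Rightarrow> bool" where
  "nd_accepts D y = (\<exists>w. length w = snd D \<and> circ_eval (fst D) (y @ w))"

definition nd_size :: "gate list \<times> nat \<Rightarrow> nat" where
  "nd_size D = length (fst D) + snd D"

definition strings :: "nat \<Rightarrow> bool list set" where
  "strings k = {y. length y = k}"

definition accept_frac :: "gate list \<times> nat \<Rightarrow> nat \<Rightarrow> real" where
  "accept_frac D k = real (card {y \<in> strings k. nd_accepts D y}) / 2 ^ k"

definition poly_bounded :: "(nat \<Rightarrow> nat) \<Rightarrow> bool" where
  "poly_bounded s = (\<exists>c::nat. \<forall>n. s n \<le> c * (n + 1) ^ c)"

definition hard_NPpoly :: "(nat \<Rightarrow> nat) \<Rightarrow> (nat \<Rightarrow> bool list set) \<Rightarrow> bool" where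
  "hard_NPpoly N R = (\<not> (\<exists>(D :: nat \<Rightarrow> gate list \<times> nat) (\<delta>::real).
      poly_bounded (\<lambda>n. nd_size (D n)) \<and> \<delta> > 0 \<and>
      (\<forall>\<^sub>F n in sequentially. accept_frac (D n) (N n) \<ge> \<delta> \<and>
                               (\<forall>y \<in> R n. \<not> nd_accepts (D n) y))))"

definition demi_bits_gen :: "(nat \<Rightarrow> bool list \<Rightarrow> bool list) \<Rightarrow> (nat \<Rightarrow> nat) \<Rightarrow> bool" where
  "demi_bits_gen g N =
     ((\<forall>\<^sub>F n in sequentially. N n > n) \<and>
      (\<forall>n x. length x = n \<longrightarrow> length (g n x) = N n) \<and>
      (\<exists>C :: nat \<Rightarrow> gate list \<times> nat list.
          poly_bounded (\<lambda>n. length (fst (C n))) \<and>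
          (\<forall>n x. length x = n \<longrightarrow> mcirc_eval (C n) x = g n x)) \<and>
      hard_NPpoly N (\<lambda>n. g n ` strings n))"

text \<open>A polynomial over F_2 in variables x_0..x_{n-1} of degree at most d, in
  (multilinear) monomial form: a finite set of monomials, each a set of at most d
  variable indices; its value is the parity of the number of satisfied monomials.\<close>
definition f2_poly_deg :: "nat \<Rightarrow> nat \<Rightarrow> nat set set \<Rightarrow> bool" where
  "f2_poly_deg n d P = (P \<subseteq> Pow {0..<n} \<and> (\<forall>M \<in> P. card M \<le> d))"

definition f2_poly_eval :: "nat set set \<Rightarrow> bool list \<Rightarrow> bool" where
  "f2_poly_eval P x = odd (card {M \<in> P. \<forall>j \<in> M. x ! j})"

text \<open>LPN samples A s + e over F_2, with A given as a predicate A i j (entry in row i, column j).\<close>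
definition lin_F2 :: "(nat \<Rightarrow> nat \<Rightarrow> bool) \<Rightarrow> nat \<Rightarrow> nat \<Rightarrow> bool list \<Rightarrow> bool list \<Rightarrow> bool list" where
  "lin_F2 A m n s e = map (\<lambda>i. odd (card {j \<in> {0..<n}. A i j \<and> s ! j}) \<noteq> e ! i) [0..<m]"

definition hamming_weight :: "bool list \<Rightarrow> nat" where
  "hamming_weight e = length (filter id e)"

definition lpn_range :: "(nat \<Rightarrow> nat \<Rightarrow> bool) \<Rightarrow> nat \<Rightarrow> nat \<Rightarrow> real \<Rightarrow> bool list set" where
  "lpn_range A m n mu = {lin_F2 A m n s e | s e. length s = n \<and> length e = m \<and>
                            real (hamming_weight e) \<le> mu * real m}"

end

theory Submission
  imports Defs "HOL-Library.Sublist"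
begin

text \<open>An LPN sample A s + e with secret length k has at most mu m \<le> k errors, and its first
  N coordinates are an output of a degree-d map over F_2.  The seed is the secret s followed,
  for each of k error slots, by d one-hot blocks of length a spelling the error position in
  base a; the indicator "slot j holds position i" is then a product of d seed bits.  With a
  about k^(1/q) and d about q(1 + eps), the seed length n is about k^(1 + 1/q) while a^d \<ge> m,
  so N = n^(1 + eps') output bits fit into the m samples.  A nondeterministic circuit rejecting
  the range of this generator, run on the first N bits of its input, rejects every noisy LPN
  sample and accepts the same fraction of random strings.\<close>

section \<open>Circuits computing sums of monomials over F_2\<close>

lemma wire_vals_snoc: "wire_vals (gs @ [g]) x = wire_vals gs x @ [gate_val x (wire_vals gs x) g]"
  by (simp add: wire_vals_def)

lemma wire_vals_append:
  "wire_vals (gs @ hs) x = foldl (\<lambda>vs g. vs @ [gate_val x vs g]) (wire_vals gs x) hs"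
  by (simp add: wire_vals_def)

lemma length_wire_vals [simp]: "length (wire_vals gs x) = length gs"
  by (induction gs rule: rev_induct) (auto simp: wire_vals_snoc, simp add: wire_vals_def)

lemma prefix_wire_vals:
  assumes "prefix gs hs" shows "prefix (wire_vals gs x) (wire_vals hs x)"
proof -
  obtain zs where "hs = gs @ zs" using assms by (auto simp: prefix_def)
  moreover have "prefix (wire_vals gs x) (wire_vals (gs @ zs) x)"
    by (induction zs rule: rev_induct) (auto simp: wire_vals_snoc simp flip: append_assoc)
  ultimately show ?thesis by simp
qed

lemma wire_wire_vals_prefix:
  assumes "prefix gs hs" "j < length gs"
  shows "wire (wire_vals hs x) j = wire (wire_vals gs x) j"
  using prefix_wire_vals[OF assms(1), of x] prefix_length_le[OF assms(1)] assms(2)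
  by (auto simp: wire_def prefix_def nth_append)

lemma wire_wire_vals_last:
  "wire (wire_vals (gs @ [g]) x) (length gs) = gate_val x (wire_vals gs x) g"
  by (simp add: wire_vals_snoc wire_def nth_append)

fun and_gates :: "gate list \<Rightarrow> nat list \<Rightarrow> gate list \<times> nat" where
  "and_gates gs [] = (gs @ [Const True], length gs)"
| "and_gates gs (v # vs) = (case and_gates gs vs of (gs', a) \<Rightarrow>
      (gs' @ [Input v, And a (length gs')], Suc (length gs')))"

lemma and_gates_spec:
  assumes "and_gates gs vs = (hs, w)"
  shows "prefix gs hs \<and> w < length hs \<and> length hs = length gs + 2 * length vs + 1 \<and>
    wire (wire_vals hs x) w = (\<forall>v\<in>set vs. wire x v)"
  using assms
proof (induction vs arbitrary: hs w)
  case Nil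
  then show ?case by (auto simp: wire_wire_vals_last)
next
  case (Cons v vs)
  obtain gs' a where rec: "and_gates gs vs = (gs', a)" by fastforce
  with Cons.prems have hs: "hs = gs' @ [Input v, And a (length gs')]" and w: "w = Suc (length gs')"
    by auto
  have "a < length gs'" using Cons.IH[OF rec] by simp
  then have "wire (wire_vals hs x) w = (wire (wire_vals gs' x) a \<and> wire x v)"
    unfolding hs w by (auto simp: wire_vals_append wire_def nth_append)
  then show ?case using Cons.IH[OF rec] unfolding hs w by auto
qed

definition xor_gates :: "nat \<Rightarrow> nat \<Rightarrow> nat \<Rightarrow> gate list" where
  "xor_gates a b n = [Neg a, Neg b, And a (n + 1), And n b, Or (n + 2) (n + 3)]"

lemma wire_xor_gates:
  assumes "a < length gs" "b < length gs"
  shows "wire (wire_vals (gs @ xor_gates a b (length gs)) x) (length gs + 4) =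
    (wire (wire_vals gs x) a \<noteq> wire (wire_vals gs x) b)"
  using assms by (auto simp: xor_gates_def wire_vals_append wire_def nth_append)

definition monomials_eval :: "nat list list \<Rightarrow> bool list \<Rightarrow> bool" where
  "monomials_eval ms x = odd (length (filter (\<lambda>m. \<forall>v\<in>set m. wire x v) ms))"

fun parity_gates :: "gate list \<Rightarrow> nat list list \<Rightarrow> gate list \<times> nat" where
  "parity_gates gs [] = (gs @ [Const False], length gs)"
| "parity_gates gs (m # ms) = (case parity_gates gs ms of (gs1, a) \<Rightarrow>
     case and_gates gs1 m of (gs2, b) \<Rightarrow> (gs2 @ xor_gates a b (length gs2), length gs2 + 4))"

lemma parity_gates_spec:
  assumes "parity_gates gs ms = (hs, w)" "\<forall>m\<in>set ms. length m \<le> d"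
  shows "prefix gs hs \<and> w < length hs \<and> length hs \<le> length gs + 1 + length ms * (2 * d + 6) \<and>
    wire (wire_vals hs x) w = monomials_eval ms x"
  using assms
proof (induction ms arbitrary: hs w)
  case Nil
  then show ?case by (auto simp: wire_wire_vals_last monomials_eval_def)
next
  case (Cons m ms)
  obtain gs1 a where rec: "parity_gates gs ms = (gs1, a)" by fastforce
  obtain gs2 b where conj: "and_gates gs1 m = (gs2, b)" by fastforce
  note IH = Cons.IH[OF rec] and AND = and_gates_spec[OF conj, of x]
  have hs: "hs = gs2 @ xor_gates a b (length gs2)" and w: "w = length gs2 + 4"
    using Cons.prems rec conj by auto
  have a: "a < length gs2" "wire (wire_vals gs2 x) a = monomials_eval ms x"
    using IH AND Cons.prems(2) prefix_length_le wire_wire_vals_prefix by fastforce+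
  have "wire (wire_vals hs x) w = (wire (wire_vals gs2 x) a \<noteq> wire (wire_vals gs2 x) b)"
    unfolding hs w using a AND by (intro wire_xor_gates) auto
  then have "wire (wire_vals hs x) w = (monomials_eval ms x \<noteq> (\<forall>v\<in>set m. wire x v))"
    using a AND by simp
  then show ?case using IH AND Cons.prems(2) unfolding hs w
    by (auto simp: monomials_eval_def xor_gates_def intro: prefix_order.trans)
qed

fun outputs_gates :: "gate list \<Rightarrow> nat list list list \<Rightarrow> gate list \<times> nat list" where
  "outputs_gates gs [] = (gs, [])"
| "outputs_gates gs (p # ps) = (case parity_gates gs p of (gs1, w) \<Rightarrow>
     case outputs_gates gs1 ps of (gs2, ws) \<Rightarrow> (gs2, w # ws))"

lemma outputs_gates_spec:
  assumes "outputs_gates gs ps = (hs, ws)"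
    and "\<forall>p\<in>set ps. \<forall>m\<in>set p. length m \<le> d" "\<forall>p\<in>set ps. length p \<le> L"
  shows "prefix gs hs \<and> (\<forall>w\<in>set ws. w < length hs) \<and>
    length hs \<le> length gs + length ps * (1 + L * (2 * d + 6)) \<and>
    map (wire (wire_vals hs x)) ws = map (\<lambda>p. monomials_eval p x) ps"
  using assms
proof (induction ps arbitrary: gs hs ws)
  case Nil
  then show ?case by simp
next
  case (Cons p ps)
  obtain gs1 w where par: "parity_gates gs p = (gs1, w)" by fastforce
  obtain gs2 ws' where rec: "outputs_gates gs1 ps = (gs2, ws')" by fastforce
  have P: "prefix gs gs1 \<and> w < length gs1 \<and> length gs1 \<le> length gs + 1 + length p * (2 * d + 6) \<and>
      wire (wire_vals gs1 x) w = monomials_eval p x"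
    using parity_gates_spec[OF par, of d x] Cons.prems(2) by auto
  note IH = Cons.IH[OF rec] Cons.prems(2,3)
  have "length p * (2 * d + 6) \<le> L * (2 * d + 6)" using Cons.prems(3) by simp
  then have "length gs2 \<le> length gs + length (p # ps) * (1 + L * (2 * d + 6))"
    using IH P by (simp add: algebra_simps)
  moreover have "hs = gs2" "ws = w # ws'" using Cons.prems(1) par rec by auto
  moreover have "wire (wire_vals gs2 x) w = wire (wire_vals gs1 x) w"
    using IH P by (intro wire_wire_vals_prefix) auto
  ultimately show ?case using IH P prefix_length_le[of gs1 gs2]
    by (auto intro: prefix_order.trans)
qed

lemma monomials_circuit:
  assumes "\<forall>p\<in>set ps. \<forall>m\<in>set p. length m \<le> d" "\<forall>p\<in>set ps. length p \<le> L"
  shows "\<exists>C. length (fst C) \<le> length ps * (1 + L * (2 * d + 6)) \<and>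
    (\<forall>x. mcirc_eval C x = map (\<lambda>p. monomials_eval p x) ps)"
proof -
  obtain hs ws where "outputs_gates [] ps = (hs, ws)" by fastforce
  from outputs_gates_spec[OF this assms] show ?thesis
    by (intro exI[of _ "(hs, ws)"]) (simp add: mcirc_eval_def)
qed

section \<open>Noisy LPN samples as outputs of a low-degree map\<close>

lemma length_filter_upt: "length (filter P [0..<k]) = card {j. j < k \<and> P j}"
  by (simp add: length_filter_conv_card cong: conj_cong)

lemma f2_poly_deg_monomials:
  assumes "\<forall>m\<in>set ms. length m \<le> d \<and> (\<forall>v\<in>set m. v < n)"
  shows "f2_poly_deg n d (set (map set ms))"
  using assms card_length order_trans by (fastforce simp: f2_poly_deg_def)

lemma f2_poly_eval_monomials:
  assumes "distinct (map set ms)" "\<forall>m\<in>set ms. \<forall>v\<in>set m. v < length x"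
  shows "f2_poly_eval (set (map set ms)) x = monomials_eval ms x"
proof -
  let ?sat = "\<lambda>m. \<forall>v\<in>set m. wire x v"
  have "{M \<in> set (map set ms). \<forall>j\<in>M. x ! j} = set (map set (filter ?sat ms))"
    using assms(2) by (auto simp: wire_def)
  moreover have "distinct (map set (filter ?sat ms))"
    using assms(1) by (rule distinct_map_filter)
  then have "card (set (map set (filter ?sat ms))) = length (filter ?sat ms)"
    by (simp only: distinct_card length_map)
  ultimately show ?thesis by (simp add: f2_poly_eval_def monomials_eval_def)
qed

definition digit :: "nat \<Rightarrow> nat \<Rightarrow> nat \<Rightarrow> nat" where
  "digit a c i = i div a ^ c mod a"

lemma digit_less: "0 < a \<Longrightarrow> digit a c i < a"
  by (simp add: digit_def)

lemma digits_inject: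
  assumes "0 < a" "u < a ^ d" "w < a ^ d" "\<forall>c<d. digit a c u = digit a c w"
  shows "u = w"
  using assms(2-4)
proof (induction d arbitrary: u w)
  case 0
  then show ?case by simp
next
  case (Suc d)
  have "\<forall>c<d. digit a c (u div a) = digit a c (w div a)"
    using Suc.prems(3) by (auto simp: digit_def div_mult2_eq dest: spec[of _ "Suc _"])
  moreover have "u div a < a ^ d" "w div a < a ^ d"
    using Suc.prems(1,2) by (auto simp: less_mult_imp_div_less mult.commute)
  ultimately have "u div a = w div a" using Suc.IH by blast
  moreover have "u mod a = w mod a" using Suc.prems(3) by (auto simp: digit_def dest: spec[of _ 0])
  ultimately show ?case by (metis div_mult_mod_eq)
qed

text \<open>Seed layout: positions below k hold the secret; for the j-th error position p and
  c < d, the a bits starting at k + a * (c + d * j) are the indicator vector of the c-th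
  base-a digit of p.\<close>
definition seed_index :: "nat \<Rightarrow> nat \<Rightarrow> nat \<Rightarrow> nat \<Rightarrow> nat \<Rightarrow> nat \<Rightarrow> nat" where
  "seed_index k d a j c r = k + (r + a * (c + d * j))"

lemma seed_index_decode:
  assumes "r < a" "c < d"
  shows "(seed_index k d a j c r - k) mod a = r" "(seed_index k d a j c r - k) div a mod d = c"
    "(seed_index k d a j c r - k) div a div d = j"
  using assms by (simp_all add: seed_index_def)

lemma le_seed_index: "k \<le> seed_index k d a j c r"
  by (simp add: seed_index_def)

lemma seed_index_less:
  assumes "j < k" "c < d" "r < a"
  shows "seed_index k d a j c r < k * (1 + d * a)"
proof -
  have "r + a * (c + d * j) < a * (1 + c + d * j)" using assms by simp
  also have "\<dots> \<le> a * (d * k)"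
    using assms by (intro mult_left_mono) (auto simp: less_iff_Suc_add algebra_simps)
  finally show ?thesis by (simp add: seed_index_def algebra_simps)
qed

definition error_encoding :: "nat \<Rightarrow> nat \<Rightarrow> nat \<Rightarrow> nat list \<Rightarrow> bool list" where
  "error_encoding k d a ps = map (\<lambda>t. t div a div d < length ps \<and>
     digit a (t div a mod d) (ps ! (t div a div d)) = t mod a) [0..<k * d * a]"

lemma wire_error_encoding:
  assumes "length s = k" "j < k" "c < d" "r < a"
  shows "wire (s @ error_encoding k d a ps) (seed_index k d a j c r) \<longleftrightarrow>
    j < length ps \<and> digit a c (ps ! j) = r"
proof -
  have ge: "k \<le> seed_index k d a j c r" by (rule le_seed_index)
  have lt: "seed_index k d a j c r < k + k * d * a"
    using seed_index_less[OF assms(2-4)] by (simp add: algebra_simps)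
  with ge have "seed_index k d a j c r - k < k * d * a" by linarith
  with ge lt show ?thesis using assms seed_index_decode[OF assms(4,3), of k j]
    by (simp add: wire_def error_encoding_def nth_append)
qed

definition error_monomial :: "nat \<Rightarrow> nat \<Rightarrow> nat \<Rightarrow> nat \<Rightarrow> nat \<Rightarrow> nat list" where
  "error_monomial k d a j i = map (\<lambda>c. seed_index k d a j c (digit a c i)) [0..<d]"

definition lpn_monomials :: "(nat \<Rightarrow> nat \<Rightarrow> bool) \<Rightarrow> nat \<Rightarrow> nat \<Rightarrow> nat \<Rightarrow> nat \<Rightarrow> nat list list" where
  "lpn_monomials B k d a i =
     map (\<lambda>l. [l]) (filter (B i) [0..<k]) @ map (\<lambda>j. error_monomial k d a j i) [0..<k]"

lemma error_monomial_sat: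
  assumes "length s = k" "j < k" "0 < a" "0 < d" "i < a ^ d" "\<forall>p\<in>set ps. p < a ^ d"
  shows "(\<forall>v\<in>set (error_monomial k d a j i). wire (s @ error_encoding k d a ps) v) \<longleftrightarrow>
    j < length ps \<and> ps ! j = i"
proof -
  have "(\<forall>v\<in>set (error_monomial k d a j i). wire (s @ error_encoding k d a ps) v) \<longleftrightarrow>
      (\<forall>c<d. j < length ps \<and> digit a c (ps ! j) = digit a c i)"
    using assms(1-3) by (auto simp: error_monomial_def wire_error_encoding digit_less)
  also have "\<dots> \<longleftrightarrow> j < length ps \<and> ps ! j = i"
    using assms(4-6) digits_inject[OF assms(3), of "ps ! j" d i] by auto
  finally show ?thesis .
qed

lemma monomials_eval_lpn:
  assumes "length s = k" "0 < a" "0 < d" "i < a ^ d" "\<forall>p\<in>set ps. p < a ^ d"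
    and "distinct ps" "length ps \<le> k"
  shows "monomials_eval (lpn_monomials B k d a i) (s @ error_encoding k d a ps) \<longleftrightarrow>
    odd (card {j \<in> {0..<k}. B i j \<and> s ! j}) \<noteq> (i \<in> set ps)"
proof -
  let ?sat = "\<lambda>m. \<forall>v\<in>set m. wire (s @ error_encoding k d a ps) v"
  have "filter (\<lambda>l. B i l \<and> wire (s @ error_encoding k d a ps) l) [0..<k] =
      filter (\<lambda>l. B i l \<and> s ! l) [0..<k]"
    using assms(1) by (intro filter_cong) (auto simp: wire_def nth_append)
  then have "filter ?sat (map (\<lambda>l. [l]) (filter (B i) [0..<k])) =
      map (\<lambda>l. [l]) (filter (\<lambda>l. B i l \<and> s ! l) [0..<k])"
    by (simp add: filter_map comp_def filter_filter)
  then have lin: "length (filter ?sat (map (\<lambda>l. [l]) (filter (B i) [0..<k]))) =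
      card {j \<in> {0..<k}. B i j \<and> s ! j}"
    by (simp add: length_filter_upt)
  have "filter ?sat (map (\<lambda>j. error_monomial k d a j i) [0..<k]) =
      map (\<lambda>j. error_monomial k d a j i) (filter (\<lambda>j. j < length ps \<and> ps ! j = i) [0..<k])"
    unfolding filter_map comp_def
    using error_monomial_sat[OF assms(1) _ assms(2-5)]
    by (intro arg_cong[where f = "map _"] filter_cong) auto
  then have "length (filter ?sat (map (\<lambda>j. error_monomial k d a j i) [0..<k])) =
      card {j. j < length ps \<and> ps ! j = i}"
    using assms(7) by (simp add: length_filter_upt) (metis less_le_trans)
  also have "\<dots> = length (filter (\<lambda>p. p = i) ps)" by (simp add: length_filter_conv_card)
  also have "\<dots> = (if i \<in> set ps then 1 else 0)"
    using assms(6) by (auto simp: distinct_length_filter)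
  finally show ?thesis using lin by (simp add: monomials_eval_def lpn_monomials_def)
qed

lemma lpn_sample_prefix_eq_monomials_eval:
  assumes "0 < a" "0 < d" "length s = k" "length e = M" "hamming_weight e \<le> k" "N \<le> M" "N \<le> a ^ d"
  shows "\<exists>x. length x = k * (1 + d * a) \<and>
    take N (lin_F2 B M k s e) = map (\<lambda>i. monomials_eval (lpn_monomials B k d a i) x) [0..<N]"
proof -
  define ps where "ps = filter (\<lambda>i. e ! i) [0..<N]"
  have "length ps = card {i. i < N \<and> e ! i}" by (simp add: ps_def length_filter_upt)
  also have "\<dots> \<le> card {i. i < M \<and> e ! i}" using assms(6) by (intro card_mono) auto
  also have "\<dots> = hamming_weight e"
    using assms(4) by (simp add: hamming_weight_def length_filter_conv_card)
  finally have "length ps \<le> k" using assms(5) by simp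
  moreover have "distinct ps" "\<forall>p\<in>set ps. p < a ^ d" using assms(7) by (auto simp: ps_def)
  ultimately have "monomials_eval (lpn_monomials B k d a i) (s @ error_encoding k d a ps) =
      lin_F2 B M k s e ! i" if "i < N" for i
    using that assms monomials_eval_lpn[of s k a d i ps B] by (simp add: lin_F2_def ps_def)
  moreover have "length (s @ error_encoding k d a ps) = k * (1 + d * a)"
    using assms(3) by (simp add: error_encoding_def algebra_simps)
  ultimately show ?thesis using assms(4,6)
    by (intro exI[of _ "s @ error_encoding k d a ps"]) (auto intro: nth_equalityI simp: lin_F2_def)
qed

lemma lpn_monomials_degree_vars:
  assumes "0 < a" "0 < d" "m \<in> set (lpn_monomials B k d a i)"
  shows "length m \<le> d \<and> (\<forall>v\<in>set m. v < k * (1 + d * a))"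
  using assms seed_index_less[OF _ _ digit_less[OF assms(1)]]
    less_le_trans[of _ k "k * (1 + d * a)"]
  by (auto simp: lpn_monomials_def error_monomial_def)

lemma length_lpn_monomials: "length (lpn_monomials B k d a i) \<le> 2 * k"
  using length_filter_le[of "B i" "[0..<k]"] by (simp add: lpn_monomials_def)

lemma distinct_lpn_monomials:
  assumes "0 < a" "0 < d"
  shows "distinct (map set (lpn_monomials B k d a i))"
proof -
  have block: "k \<le> v \<and> (v - k) div a div d = j" if "v \<in> set (error_monomial k d a j i)" for v j
    using that seed_index_decode(3)[OF digit_less[OF assms(1)]] le_seed_index
    by (auto simp: error_monomial_def)
  have "seed_index k d a j 0 (digit a 0 i) \<in> set (error_monomial k d a j i)" for j
    using assms(2) by (simp add: error_monomial_def)
  then have "inj (\<lambda>j. set (error_monomial k d a j i))"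
    using block by (intro injI) (metis)
  moreover have "inj (\<lambda>l :: nat. {l})" by (simp add: inj_on_def)
  moreover have "{l} \<noteq> set (error_monomial k d a j i)" if "l < k" for l j
    using that block[of l j] by auto
  ultimately show ?thesis
    unfolding lpn_monomials_def map_append distinct_append
    by (auto simp: distinct_map comp_def intro: inj_on_subset)
qed

section \<open>Parameters\<close>

lemma eventually_mult_powr_le:
  fixes \<alpha> \<beta> C :: real
  assumes "\<alpha> < \<beta>"
  shows "\<forall>\<^sub>F k in sequentially. C * real k powr \<alpha> \<le> real k powr \<beta>"
proof -
  define k0 where "k0 = max C 1 powr (1 / (\<beta> - \<alpha>))"
  have "C * real k powr \<alpha> \<le> real k powr \<beta>" if k: "k0 \<le> real k" for k
  proof -
    have "1 \<le> k0" using assms by (simp add: k0_def ge_one_powr_ge_zero)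
    then have pos: "0 < real k" using k by linarith
    have "C \<le> k0 powr (\<beta> - \<alpha>)" using assms by (simp add: k0_def powr_powr)
    also have "\<dots> \<le> real k powr (\<beta> - \<alpha>)"
      using k assms \<open>1 \<le> k0\<close> by (intro powr_mono2) auto
    finally have "C * real k powr \<alpha> \<le> real k powr (\<beta> - \<alpha>) * real k powr \<alpha>"
      by (intro mult_right_mono) auto
    also have "\<dots> = real k powr \<beta>" using pos by (simp add: powr_add[symmetric])
    finally show ?thesis .
  qed
  moreover have "\<forall>\<^sub>F k in sequentially. k0 \<le> real k"
    using eventually_ge_at_top[of "nat \<lceil>k0\<rceil>"] by eventually_elim linarith
  ultimately show ?thesis by (auto elim: eventually_mono)
qed

lemma eventually_less_floor_powr:
  fixes \<epsilon> :: real
  assumes "0 < \<epsilon>"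
  shows "\<forall>\<^sub>F n in sequentially. n < nat \<lfloor>real n powr (1 + \<epsilon>)\<rfloor>"
proof -
  have "1 < 1 + \<epsilon>" using assms by simp
  from eventually_mult_powr_le[OF this, of 2] eventually_ge_at_top[of 1] show ?thesis
  proof eventually_elim
    case (elim n)
    then have "real n + 1 \<le> real n powr (1 + \<epsilon>)" by simp
    then show ?case by linarith
  qed
qed

lemma floor_powr_le_square:
  fixes \<epsilon> :: real
  assumes "0 \<le> \<epsilon>" "\<epsilon> \<le> 1"
  shows "nat \<lfloor>real n powr (1 + \<epsilon>)\<rfloor> \<le> (n + 1) ^ 2"
proof -
  have "real n powr (1 + \<epsilon>) \<le> real (n + 1) powr (1 + \<epsilon>)" using assms by (intro powr_mono2) auto
  also have "\<dots> \<le> real (n + 1) powr 2" using assms by (intro powr_mono) auto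
  also have "\<dots> = real ((n + 1) ^ 2)" by (simp add: powr_realpow)
  finally show ?thesis by linarith
qed

definition radix :: "nat \<Rightarrow> nat \<Rightarrow> nat" where
  "radix q k = nat \<lfloor>real k powr (1 / real q)\<rfloor> + 1"

lemma radix_pos: "0 < radix q k"
  by (simp add: radix_def)

lemma radix_gt: "real k powr (1 / real q) < real (radix q k)"
  unfolding radix_def by linarith

lemma radix_mono: "k \<le> k' \<Longrightarrow> radix q k \<le> radix q k'"
  unfolding radix_def by (intro add_right_mono nat_mono floor_mono powr_mono2) auto

lemma radix_le_Suc: "radix q k \<le> k + 1"
proof (cases "k = 0")
  case False
  then have "real k powr (1 / real q) \<le> real k powr 1"
    by (intro powr_mono) (auto simp: divide_le_eq_1)
  then show ?thesis using False unfolding radix_def by simp linarith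
qed (simp add: radix_def)

lemma radix_le:
  assumes "1 \<le> k"
  shows "real (radix q k) \<le> 2 * real k powr (1 / real q)"
proof -
  have "1 \<le> real k powr (1 / real q)" using assms by (simp add: ge_one_powr_ge_zero)
  then show ?thesis unfolding radix_def by linarith
qed

lemma powr_le_radix_power:
  assumes "0 < q" "0 \<le> \<epsilon>" "real q * (1 + \<epsilon>) \<le> real d"
  shows "real k powr (1 + \<epsilon>) \<le> real (radix q k ^ d)"
proof -
  have "real k = (real k powr (1 / real q)) ^ q"
    using assms(1) by (cases "k = 0") (simp_all add: powr_realpow[symmetric] powr_powr)
  also have "\<dots> \<le> real (radix q k) ^ q"
    using radix_gt[of k q] by (intro power_mono) auto
  finally have "real k powr (1 + \<epsilon>) \<le> (real (radix q k) ^ q) powr (1 + \<epsilon>)"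
    using assms(2) by (intro powr_mono2) auto
  also have "\<dots> = real (radix q k) powr (real q * (1 + \<epsilon>))"
    using radix_pos[of q k] by (simp add: powr_realpow[symmetric] powr_powr)
  also have "\<dots> \<le> real (radix q k) powr (real d)"
    using radix_pos[of q k] assms(3) by (intro powr_mono) auto
  also have "\<dots> = real (radix q k ^ d)"
    using radix_pos[of q k] by (simp add: powr_realpow)
  finally show ?thesis .
qed

definition seed_length :: "nat \<Rightarrow> nat \<Rightarrow> nat \<Rightarrow> nat" where
  "seed_length q d k = k * (1 + d * radix q k)"

lemma le_seed_length: "k \<le> seed_length q d k"
  by (simp add: seed_length_def)

lemma strict_mono_seed_length: "strict_mono (seed_length q d)"
proof (rule strict_monoI)
  fix k k' :: nat assume "k < k'"
  then have "seed_length q d k \<le> k * (1 + d * radix q k')"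
    unfolding seed_length_def by (intro mult_left_mono add_left_mono radix_mono) auto
  also have "\<dots> < seed_length q d k'"
    unfolding seed_length_def using \<open>k < k'\<close> by (intro mult_strict_right_mono) auto
  finally show "seed_length q d k < seed_length q d k'" .
qed

lemma poly_bounded_seed_length: "poly_bounded (seed_length q d)"
proof -
  have "seed_length q d k \<le> k * (1 + d * (k + 1))" for k
    unfolding seed_length_def by (intro mult_left_mono add_left_mono radix_le_Suc) auto
  also have "\<dots> k \<le> (d + 2) * (k + 1) ^ (d + 2)" for k
  proof -
    have "k * (1 + d * (k + 1)) \<le> (d + 2) * (k + 1) ^ 2"
      by (simp add: power2_eq_square algebra_simps)
    also have "\<dots> \<le> (d + 2) * (k + 1) ^ (d + 2)"
      by (intro mult_left_mono power_increasing) auto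
    finally show ?thesis .
  qed
  finally show ?thesis unfolding poly_bounded_def by blast
qed

lemma seed_length_le:
  assumes "1 \<le> k" "1 \<le> d"
  shows "real (seed_length q d k) \<le> 3 * real d * real k powr (1 + 1 / real q)"
proof -
  let ?r = "real k powr (1 / real q)"
  have "1 \<le> ?r" using assms(1) by (simp add: ge_one_powr_ge_zero)
  have "real (seed_length q d k) = real k * (1 + real d * real (radix q k))"
    by (simp add: seed_length_def algebra_simps)
  also have "\<dots> \<le> real k * (1 + real d * (2 * ?r))"
    using radix_le[OF assms(1)] by (intro mult_left_mono add_left_mono) auto
  also have "\<dots> \<le> real k * (3 * real d * ?r)"
    using assms(2) \<open>1 \<le> ?r\<close> mult_mono[of 1 "real d" 1 ?r] by (intro mult_left_mono) auto
  also have "\<dots> = 3 * real d * real k powr (1 + 1 / real q)"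
    using assms(1) by (simp add: powr_add)
  finally show ?thesis .
qed

lemma eventually_seed_length_powr_le:
  fixes \<epsilon> \<epsilon>' :: real
  assumes "0 < q" "1 \<le> d" "0 \<le> \<epsilon>'" "(1 + 1 / real q) * (1 + \<epsilon>') < 1 + \<epsilon>"
  shows "\<forall>\<^sub>F k in sequentially. real (seed_length q d k) powr (1 + \<epsilon>') \<le> real k powr (1 + \<epsilon>)"
  using eventually_mult_powr_le[OF assms(4), of "(3 * real d) powr (1 + \<epsilon>')"]
    eventually_ge_at_top[of 1]
proof eventually_elim
  case (elim k)
  have "real (seed_length q d k) powr (1 + \<epsilon>') \<le>
      (3 * real d * real k powr (1 + 1 / real q)) powr (1 + \<epsilon>')"
    using seed_length_le[OF elim(2) assms(2)] assms(3) by (intro powr_mono2) auto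
  also have "\<dots> = (3 * real d) powr (1 + \<epsilon>') * real k powr ((1 + 1 / real q) * (1 + \<epsilon>'))"
    by (simp add: powr_mult powr_powr)
  finally show ?case using elim(1) by linarith
qed

lemma generator_parameters_exist:
  fixes \<epsilon> :: real
  assumes "0 < \<epsilon>"
  shows "\<exists>\<epsilon>' q d. 0 < \<epsilon>' \<and> \<epsilon>' \<le> 1 \<and> 0 < q \<and> 2 \<le> d \<and> real q * (1 + \<epsilon>) \<le> real d \<and>
    (1 + 1 / real q) * (1 + \<epsilon>') < 1 + \<epsilon>"
proof (intro exI conjI)
  define \<delta> where "\<delta> = min \<epsilon> 1"
  have \<delta>: "0 < \<delta>" "\<delta> \<le> 1" "\<delta> \<le> \<epsilon>" using assms by (auto simp: \<delta>_def)
  define q where "q = nat \<lceil>4 / \<delta>\<rceil>"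
  have "4 \<le> 4 / \<delta>" "4 / \<delta> \<le> real q" using \<delta> by (auto simp: q_def le_divide_eq)
  then have q: "4 \<le> real q" by linarith
  have "4 \<le> \<delta> * real q" using \<open>4 / \<delta> \<le> real q\<close> \<delta> by (simp add: field_simps)
  then have "1 / real q \<le> \<delta> / 4" using q by (simp add: field_simps)
  show "0 < \<delta> / 4" "\<delta> / 4 \<le> 1" "0 < q" using \<delta> q by auto
  show "real q * (1 + \<epsilon>) \<le> real (nat \<lceil>real q * (1 + \<epsilon>)\<rceil>)" by linarith
  have "real q \<le> real q * (1 + \<epsilon>)" using assms mult_left_mono[of 1 "1 + \<epsilon>" "real q"] by simp
  then show "2 \<le> nat \<lceil>real q * (1 + \<epsilon>)\<rceil>" using q by linarith
  have "(1 + 1 / real q) * (1 + \<delta> / 4) \<le> (1 + \<delta> / 4) * (1 + \<delta> / 4)"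
    using \<open>1 / real q \<le> \<delta> / 4\<close> \<delta> by (intro mult_right_mono) auto
  also have "\<dots> = 1 + \<delta> / 2 + \<delta> * \<delta> / 16" by (simp add: algebra_simps)
  also have "\<dots> < 1 + \<delta>" using \<delta> mult_right_mono[of \<delta> 1 \<delta>] by linarith
  finally show "(1 + 1 / real q) * (1 + \<delta> / 4) < 1 + \<epsilon>" using \<delta> by linarith
qed

section \<open>Hardness under prefix reductions\<close>

definition shift_inputs :: "(nat \<Rightarrow> nat) \<Rightarrow> gate \<Rightarrow> gate" where
  "shift_inputs \<sigma> g = (case g of Input i \<Rightarrow> Input (\<sigma> i) | _ \<Rightarrow> g)"

lemma wire_vals_shift_inputs:
  assumes "\<And>i. wire x (\<sigma> i) = wire x' i"
  shows "wire_vals (map (shift_inputs \<sigma>) gs) x = wire_vals gs x'"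
proof (induction gs rule: rev_induct)
  case (snoc g gs)
  have "gate_val x vs (shift_inputs \<sigma> g) = gate_val x' vs g" for vs
    using assms by (cases g) (auto simp: shift_inputs_def)
  then show ?case using snoc by (simp add: wire_vals_snoc)
qed (simp add: wire_vals_def)

text \<open>The circuit reads its witness right after its input, so the positions of the witness
  bits move from N onwards to M onwards.\<close>
definition read_prefix :: "nat \<Rightarrow> nat \<Rightarrow> gate list \<times> nat \<Rightarrow> gate list \<times> nat" where
  "read_prefix N M D = (map (shift_inputs (\<lambda>i. if i < N then i else i + (M - N))) (fst D), snd D)"

lemma nd_size_read_prefix [simp]: "nd_size (read_prefix N M D) = nd_size D"
  by (simp add: read_prefix_def nd_size_def)

lemma nd_accepts_read_prefix:
  assumes "length y = M" "N \<le> M"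
  shows "nd_accepts (read_prefix N M D) y \<longleftrightarrow> nd_accepts D (take N y)"
proof -
  have "wire (y @ w) (if i < N then i else i + (M - N)) = wire (take N y @ w) i" for w i
    using assms by (auto simp: wire_def nth_append)
  then show ?thesis
    by (simp add: nd_accepts_def read_prefix_def circ_eval_def wire_vals_shift_inputs)
qed

lemma card_strings: "card (strings n) = 2 ^ n"
  using card_lists_length_eq[of "UNIV :: bool set" n] by (simp add: strings_def)

lemma card_strings_take:
  assumes "N \<le> M"
  shows "card {y \<in> strings M. P (take N y)} = card {y \<in> strings N. P y} * 2 ^ (M - N)"
proof -
  have "{y \<in> strings M. P (take N y)} = (\<lambda>(u, v). u @ v) ` ({u \<in> strings N. P u} \<times> strings (M - N))"
  proof (intro set_eqI iffI)
    fix y assume "y \<in> {y \<in> strings M. P (take N y)}"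
    then show "y \<in> (\<lambda>(u, v). u @ v) ` ({u \<in> strings N. P u} \<times> strings (M - N))"
      using assms by (intro image_eqI[of _ _ "(take N y, drop N y)"]) (auto simp: strings_def)
  qed (use assms in \<open>auto simp: strings_def\<close>)
  moreover have "inj_on (\<lambda>(u, v). u @ v) ({u \<in> strings N. P u} \<times> strings (M - N))"
    by (auto simp: inj_on_def strings_def)
  ultimately show ?thesis by (simp add: card_image card_cartesian_product card_strings)
qed

lemma accept_frac_read_prefix:
  assumes "N \<le> M"
  shows "accept_frac (read_prefix N M D) M = accept_frac D N"
proof -
  have "{y \<in> strings M. nd_accepts (read_prefix N M D) y} =
      {y \<in> strings M. nd_accepts D (take N y)}"
    using nd_accepts_read_prefix[OF _ assms, of _ D] by (auto simp: strings_def)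
  moreover have "(2::real) ^ M = 2 ^ N * 2 ^ (M - N)" using assms by (simp flip: power_add)
  ultimately show ?thesis using card_strings_take[OF assms] by (simp add: accept_frac_def)
qed

lemma poly_bounded_comp:
  assumes "poly_bounded s" "poly_bounded \<nu>"
  shows "poly_bounded (\<lambda>k. s (\<nu> k))"
proof -
  obtain c c' where c: "\<And>n. s n \<le> c * (n + 1) ^ c" and c': "\<And>k. \<nu> k \<le> c' * (k + 1) ^ c'"
    using assms unfolding poly_bounded_def by blast
  define C where "C = c * (c' + 1) ^ c + c' * c"
  have "s (\<nu> k) \<le> C * (k + 1) ^ C" for k
  proof -
    have "\<nu> k + 1 \<le> (c' + 1) * (k + 1) ^ c'"
      using c'[of k] one_le_power[of "k + 1" c'] by (simp only: distrib_right mult_1_left) linarith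
    then have "s (\<nu> k) \<le> c * ((c' + 1) * (k + 1) ^ c') ^ c"
      using c[of "\<nu> k"] by (meson le_trans mult_le_mono2 power_mono zero_le)
    also have "\<dots> = c * (c' + 1) ^ c * (k + 1) ^ (c' * c)"
      by (simp only: power_mult_distrib power_mult mult.assoc)
    also have "\<dots> \<le> C * (k + 1) ^ C"
      by (intro mult_mono power_increasing) (auto simp: C_def)
    finally show ?thesis .
  qed
  then show ?thesis unfolding poly_bounded_def by blast
qed

lemma hard_NPpoly_reduction:
  assumes hard: "hard_NPpoly M R"
    and \<nu>: "strict_mono \<nu>" "poly_bounded \<nu>"
    and len: "\<forall>\<^sub>F k in sequentially. N (\<nu> k) \<le> M k"
    and cover: "\<forall>\<^sub>F k in sequentially. \<forall>y\<in>R k. length y = M k \<and> take (N (\<nu> k)) y \<in> G (\<nu> k)"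
  shows "hard_NPpoly N G"
  unfolding hard_NPpoly_def
proof (rule notI, elim exE conjE)
  fix D :: "nat \<Rightarrow> gate list \<times> nat" and \<delta> :: real
  assume size: "poly_bounded (\<lambda>n. nd_size (D n))" and "0 < \<delta>"
    and D: "\<forall>\<^sub>F n in sequentially. \<delta> \<le> accept_frac (D n) (N n) \<and> (\<forall>y\<in>G n. \<not> nd_accepts (D n) y)"
  define D' where "D' k = read_prefix (N (\<nu> k)) (M k) (D (\<nu> k))" for k
  have "poly_bounded (\<lambda>k. nd_size (D' k))"
    using poly_bounded_comp[OF size \<nu>(2)] by (simp add: D'_def)
  moreover have "\<forall>\<^sub>F k in sequentially. \<delta> \<le> accept_frac (D' k) (M k) \<and>
      (\<forall>y\<in>R k. \<not> nd_accepts (D' k) y)"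
    using eventually_compose_filterlim[OF D filterlim_subseq[OF \<nu>(1)]] len cover
    by eventually_elim (auto simp: D'_def accept_frac_read_prefix nd_accepts_read_prefix)
  ultimately show False using hard \<open>0 < \<delta>\<close> unfolding hard_NPpoly_def by blast
qed

text \<open>Seed lengths outside the range of seed_length get the all-zero map: a distinguisher
  for the generator must work for all large n, in particular along that range.\<close>
definition generator_monomials ::
  "(nat \<Rightarrow> nat \<Rightarrow> nat \<Rightarrow> bool) \<Rightarrow> nat \<Rightarrow> nat \<Rightarrow> nat \<Rightarrow> nat \<Rightarrow> nat list list"
  where "generator_monomials A q d n i =
    (if n \<in> range (seed_length q d) then
       let k = inv (seed_length q d) n in lpn_monomials (A k) k d (radix q k) i
     else [])"

definition lpn_generator ::
  "(nat \<Rightarrow> nat \<Rightarrow> nat \<Rightarrow> bool) \<Rightarrow> nat \<Rightarrow> nat \<Rightarrow> (nat \<Rightarrow> nat) \<Rightarrow> nat \<Rightarrow> bool list \<Rightarrow> bool list"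
  where "lpn_generator A q d N n x =
    map (\<lambda>i. monomials_eval (generator_monomials A q d n i) x) [0..<N n]"

lemma generator_monomials_seed_length:
  "generator_monomials A q d (seed_length q d k) i = lpn_monomials (A k) k d (radix q k) i"
  using strict_mono_imp_inj_on[OF strict_mono_seed_length]
  by (simp add: generator_monomials_def inv_f_f)

lemma generator_monomials_wf:
  assumes "0 < d"
  shows "\<forall>m\<in>set (generator_monomials A q d n i). length m \<le> d \<and> (\<forall>v\<in>set m. v < n)"
    and "length (generator_monomials A q d n i) \<le> 2 * n"
    and "distinct (map set (generator_monomials A q d n i))"
proof -
  let ?ms = "generator_monomials A q d n i"
  have "(\<forall>m\<in>set ?ms. length m \<le> d \<and> (\<forall>v\<in>set m. v < n)) \<and> length ?ms \<le> 2 * n \<and>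
      distinct (map set ?ms)"
  proof (cases "n \<in> range (seed_length q d)")
    case True
    then obtain k where n_eq: "n = seed_length q d k" by blast
    have "?ms = lpn_monomials (A k) k d (radix q k) i"
      unfolding n_eq by (rule generator_monomials_seed_length)
    moreover have "n = k * (1 + d * radix q k)" "2 * k \<le> 2 * n"
      using n_eq le_seed_length[of k q d] by (simp_all add: seed_length_def)
    ultimately show ?thesis
      using lpn_monomials_degree_vars[OF radix_pos assms] length_lpn_monomials[of "A k" k d _ i]
        distinct_lpn_monomials[OF radix_pos assms]
      by (metis le_trans)
  qed (simp add: generator_monomials_def)
  then show "\<forall>m\<in>set ?ms. length m \<le> d \<and> (\<forall>v\<in>set m. v < n)" "length ?ms \<le> 2 * n"
    "distinct (map set ?ms)"
    by auto
qed

lemma lpn_generator_f2_poly: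
  assumes "0 < d" "i < N n"
  shows "\<exists>P. f2_poly_deg n d P \<and>
    (\<forall>x. length x = n \<longrightarrow> lpn_generator A q d N n x ! i = f2_poly_eval P x)"
proof (intro exI conjI allI impI)
  let ?ms = "generator_monomials A q d n i"
  note wf = generator_monomials_wf[OF assms(1), of A q n i]
  show "f2_poly_deg n d (set (map set ?ms))" using wf(1) by (rule f2_poly_deg_monomials)
  fix x :: "bool list" assume "length x = n"
  then have "f2_poly_eval (set (map set ?ms)) x = monomials_eval ?ms x"
    using wf by (intro f2_poly_eval_monomials) auto
  then show "lpn_generator A q d N n x ! i = f2_poly_eval (set (map set ?ms)) x"
    using assms(2) by (simp add: lpn_generator_def)
qed

lemma lpn_generator_circuits:
  assumes "0 < d" "\<And>n. N n \<le> (n + 1) ^ 2"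
  shows "\<exists>C. poly_bounded (\<lambda>n. length (fst (C n))) \<and>
    (\<forall>n x. length x = n \<longrightarrow> mcirc_eval (C n) x = lpn_generator A q d N n x)"
proof -
  have "\<exists>C. length (fst C) \<le> N n * (1 + 2 * n * (2 * d + 6)) \<and>
      (\<forall>x. mcirc_eval C x = lpn_generator A q d N n x)" for n
    using monomials_circuit[of "map (generator_monomials A q d n) [0..<N n]" d "2 * n"]
      generator_monomials_wf[OF assms(1)]
    by (simp add: lpn_generator_def comp_def)
  then obtain C where C: "\<And>n. length (fst (C n)) \<le> N n * (1 + 2 * n * (2 * d + 6))"
    "\<And>n x. mcirc_eval (C n) x = lpn_generator A q d N n x"
    by metis
  have "length (fst (C n)) \<le> (4 * d + 13) * (n + 1) ^ (4 * d + 13)" for n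
  proof -
    have "N n * (1 + 2 * n * (2 * d + 6)) \<le> (n + 1) ^ 2 * ((4 * d + 13) * (n + 1))"
      using assms(2)[of n] by (intro mult_mono) (auto simp: algebra_simps)
    with C(1)[of n] have "length (fst (C n)) \<le> (n + 1) ^ 2 * ((4 * d + 13) * (n + 1))"
      by (rule order_trans)
    also have "\<dots> = (4 * d + 13) * (n + 1) ^ 3"
      by (simp add: power2_eq_square power3_eq_cube algebra_simps)
    also have "\<dots> \<le> (4 * d + 13) * (n + 1) ^ (4 * d + 13)"
      by (intro mult_left_mono power_increasing) auto
    finally show ?thesis .
  qed
  then show ?thesis using C(2) unfolding poly_bounded_def by blast
qed

lemma lpn_noise_weight_le:
  fixes \<epsilon> :: real
  assumes "1 \<le> k" "real w \<le> real k powr - \<epsilon> * real (nat \<lfloor>real k powr (1 + \<epsilon>)\<rfloor>)"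
  shows "w \<le> k"
proof -
  have "real k powr - \<epsilon> * real (nat \<lfloor>real k powr (1 + \<epsilon>)\<rfloor>) \<le> real k powr - \<epsilon> * real k powr (1 + \<epsilon>)"
    by (intro mult_left_mono) auto
  also have "\<dots> = real k" using assms(1) by (simp flip: powr_add)
  finally show ?thesis using assms(2) by linarith
qed

lemma length_lpn_range: "y \<in> lpn_range B M k mu \<Longrightarrow> length y = M"
  by (auto simp: lpn_range_def lin_F2_def)

lemma take_lpn_range_in_generator_image:
  fixes \<epsilon> :: real
  assumes "0 < q" "1 \<le> d" "0 \<le> \<epsilon>" "real q * (1 + \<epsilon>) \<le> real d" "1 \<le> k"
    and M: "M = nat \<lfloor>real k powr (1 + \<epsilon>)\<rfloor>" and "N (seed_length q d k) \<le> M"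
    and "y \<in> lpn_range (A k) M k (real k powr - \<epsilon>)"
  shows "take (N (seed_length q d k)) y \<in>
    lpn_generator A q d N (seed_length q d k) ` strings (seed_length q d k)"
proof -
  obtain s e where y: "y = lin_F2 (A k) M k s e" and "length s = k" "length e = M"
    and "real (hamming_weight e) \<le> real k powr - \<epsilon> * real M"
    using assms(8) unfolding lpn_range_def by blast
  then have "hamming_weight e \<le> k" using lpn_noise_weight_le assms(5) M by blast
  moreover have "M \<le> radix q k ^ d" using powr_le_radix_power[OF assms(1,3,4), of k] M by linarith
  ultimately obtain x where x: "length x = k * (1 + d * radix q k)"
    "take (N (seed_length q d k)) y =
      map (\<lambda>i. monomials_eval (lpn_monomials (A k) k d (radix q k) i) x)
        [0..<N (seed_length q d k)]"
    using lpn_sample_prefix_eq_monomials_eval[OF radix_pos _ \<open>length s = k\<close> \<open>length e = M\<close>,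
        of d "N (seed_length q d k)" q k "A k"] assms(2,7) unfolding y by auto
  have "length x = seed_length q d k" using x(1) by (simp add: seed_length_def)
  moreover have "take (N (seed_length q d k)) y = lpn_generator A q d N (seed_length q d k) x"
    using x(2) by (simp add: lpn_generator_def generator_monomials_seed_length)
  ultimately show ?thesis by (auto simp: strings_def)
qed

lemma hard_NPpoly_lpn_generator:
  fixes \<epsilon> \<epsilon>' :: real
  assumes "0 < q" "1 \<le> d" "0 \<le> \<epsilon>" "0 \<le> \<epsilon>'" "real q * (1 + \<epsilon>) \<le> real d"
    and "(1 + 1 / real q) * (1 + \<epsilon>') < 1 + \<epsilon>"
    and m_def: "\<And>k. m k = nat \<lfloor>real k powr (1 + \<epsilon>)\<rfloor>"
    and mu_def: "\<And>k. mu k = real k powr (- \<epsilon>)"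
    and hard: "hard_NPpoly m (\<lambda>k. lpn_range (A k) (m k) k (mu k))"
  defines "N \<equiv> \<lambda>n. nat \<lfloor>real n powr (1 + \<epsilon>')\<rfloor>"
  shows "hard_NPpoly N (\<lambda>n. lpn_generator A q d N n ` strings n)"
  using hard strict_mono_seed_length poly_bounded_seed_length
proof (rule hard_NPpoly_reduction)
  have "N (seed_length q d k) \<le> m k"
    if "real (seed_length q d k) powr (1 + \<epsilon>') \<le> real k powr (1 + \<epsilon>)" for k
    using that unfolding N_def m_def by (intro nat_mono floor_mono)
  then show len: "\<forall>\<^sub>F k in sequentially. N (seed_length q d k) \<le> m k"
    using eventually_seed_length_powr_le[OF assms(1,2,4,6)] by (auto elim: eventually_mono)
  show "\<forall>\<^sub>F k in sequentially. \<forall>y\<in>lpn_range (A k) (m k) k (mu k). length y = m k \<and>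
      take (N (seed_length q d k)) y \<in>
        lpn_generator A q d N (seed_length q d k) ` strings (seed_length q d k)"
    using len eventually_ge_at_top[of 1]
    by eventually_elim
      (auto simp: mu_def length_lpn_range
        intro: take_lpn_range_in_generator_image[OF assms(1-3,5) _ m_def])
qed

theorem factB3:
  fixes eps :: real and m :: "nat \<Rightarrow> nat" and mu :: "nat \<Rightarrow> real"
    and A :: "nat \<Rightarrow> nat \<Rightarrow> nat \<Rightarrow> bool"
  assumes eps_pos: "eps > 0"
    and m_def: "\<And>n. m n = nat \<lfloor>real n powr (1 + eps)\<rfloor>"
    and mu_def: "\<And>n. mu n = real n powr (- eps)"
    and hard: "hard_NPpoly m (\<lambda>n. lpn_range (A n) (m n) n (mu n))"
  shows "\<exists>(eps'::real) (d::nat) (g :: nat \<Rightarrow> bool list \<Rightarrow> bool list).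
           eps' > 0 \<and> d \<ge> 2 \<and>
           demi_bits_gen g (\<lambda>n. nat \<lfloor>real n powr (1 + eps')\<rfloor>) \<and>
           (\<forall>n i. i < nat \<lfloor>real n powr (1 + eps')\<rfloor> \<longrightarrow>
              (\<exists>P. f2_poly_deg n d P \<and>
                   (\<forall>x. length x = n \<longrightarrow> g n x ! i = f2_poly_eval P x)))"
proof -
  obtain eps' q d where params: "0 < eps'" "eps' \<le> 1" "0 < q" "2 \<le> d"
    "real q * (1 + eps) \<le> real d" "(1 + 1 / real q) * (1 + eps') < 1 + eps"
    using generator_parameters_exist[OF eps_pos] by blast
  define N where "N = (\<lambda>n. nat \<lfloor>real n powr (1 + eps')\<rfloor>)"
  define g where "g = lpn_generator A q d N"
  have "demi_bits_gen g N"
    unfolding demi_bits_gen_def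
  proof (intro conjI)
    show "\<forall>\<^sub>F n in sequentially. n < N n"
      unfolding N_def by (rule eventually_less_floor_powr[OF params(1)])
    show "\<forall>n x. length x = n \<longrightarrow> length (g n x) = N n" by (simp add: g_def lpn_generator_def)
    show "\<exists>C. poly_bounded (\<lambda>n. length (fst (C n))) \<and>
        (\<forall>n x. length x = n \<longrightarrow> mcirc_eval (C n) x = g n x)"
      unfolding g_def using params(1,2,4) floor_powr_le_square
      by (intro lpn_generator_circuits) (auto simp: N_def)
    show "hard_NPpoly N (\<lambda>n. g n ` strings n)"
      unfolding g_def N_def using eps_pos params
      by (intro hard_NPpoly_lpn_generator[OF _ _ _ _ _ _ m_def mu_def hard]) auto
  qed
  moreover have "\<forall>n i. i < N n \<longrightarrow>
      (\<exists>P. f2_poly_deg n d P \<and> (\<forall>x. length x = n \<longrightarrow> g n x ! i = f2_poly_eval P x))"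
    using params(4) by (auto simp: g_def intro: lpn_generator_f2_poly)
  ultimately show ?thesis using params(1,4) unfolding N_def by blast
qed

end
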